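(* Let $(H_i<G_i)_{i\in\mathbb N}$ be a sequence of inclusions of groups, let $\omega$ be a free ultrafilter on $\mathbb N$, and let $\mathbf G=\prod_\omega G_i$ and $\mathbf H=\prod_\omega H_i$ be algebraic ultraproducts. Then $\ast_{\mathbf H}\mathbf G$ naturally embeds into the algebraic ultraproduct $\mathbf K=\prod_\omega \ast_{H_i}G_i$.
   Context: For a sequence of groups $(L_i)$ and a free ultrafilter $\omega$ on $\mathbb N$, the algebraic ultraproduct is $\prod_\omega L_i=(\prod_{i\in\mathbb N}L_i)/N$ where $N=\{(g_i): \{i: g_i=1\}\in\omega\}$. For a group $G$ and subgroup $H<G$, $\ast_H G$ denotes the amalgamated free product of countably infinitely many copies of $G$ over the common subgroup $H$. *)

theory Defs
  imports "HOL-Algebra.Algebra"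
begin

definition free_ultrafilter :: "nat set set \<Rightarrow> bool" where
  "free_ultrafilter U \<longleftrightarrow>
     UNIV \<in> U \<and> {} \<notin> U \<and>
     (\<forall>A B. A \<in> U \<longrightarrow> A \<subseteq> B \<longrightarrow> B \<in> U) \<and>
     (\<forall>A B. A \<in> U \<longrightarrow> B \<in> U \<longrightarrow> A \<inter> B \<in> U) \<and>
     (\<forall>A. A \<in> U \<or> - A \<in> U) \<and>
     (\<forall>A. finite A \<longrightarrow> A \<notin> U)"

definition ultra_null :: "(nat \<Rightarrow> ('g, 'b) monoid_scheme) \<Rightarrow> nat set set \<Rightarrow> (nat \<Rightarrow> 'g) set" where
  "ultra_null G U = {f \<in> carrier (product_group UNIV G). {i. f i = \<one>\<^bsub>G i\<^esub>} \<in> U}"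

definition ultraprod :: "(nat \<Rightarrow> ('g, 'b) monoid_scheme) \<Rightarrow> nat set set \<Rightarrow> (nat \<Rightarrow> 'g) set monoid" where
  "ultraprod G U = product_group UNIV G Mod ultra_null G U"

definition ultra_class :: "(nat \<Rightarrow> ('g, 'b) monoid_scheme) \<Rightarrow> nat set set \<Rightarrow> (nat \<Rightarrow> 'g) \<Rightarrow> (nat \<Rightarrow> 'g) set" where
  "ultra_class G U f = ultra_null G U #>\<^bsub>product_group UNIV G\<^esub> f"

text \<open>For subgroups H_i of G_i, prod_omega H_i viewed (via the natural embedding)
  as the subgroup of prod_omega G_i consisting of the classes of sequences in prod H_i.\<close>
definition ultraprod_sub :: "(nat \<Rightarrow> ('g, 'b) monoid_scheme) \<Rightarrow> (nat \<Rightarrow> 'g set) \<Rightarrow> nat set set \<Rightarrow> (nat \<Rightarrow> 'g) set set" where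
  "ultraprod_sub G H U = {ultra_class G U f | f. \<forall>i. f i \<in> H i}"

text \<open>Words are lists of letters (j, g): g in the j-th copy of G.\<close>
inductive amalg_rel :: "('g, 'b) monoid_scheme \<Rightarrow> 'g set \<Rightarrow> (nat \<times> 'g) list \<Rightarrow> (nat \<times> 'g) list \<Rightarrow> bool"
  for G :: "('g, 'b) monoid_scheme" and H :: "'g set" where
  refl: "amalg_rel G H w w"
| sym: "amalg_rel G H v w \<Longrightarrow> amalg_rel G H w v"
| trans: "amalg_rel G H u v \<Longrightarrow> amalg_rel G H v w \<Longrightarrow> amalg_rel G H u w"
| cong: "amalg_rel G H v w \<Longrightarrow> amalg_rel G H (x @ v @ y) (x @ w @ y)"
| mult: "g \<in> carrier G \<Longrightarrow> g' \<in> carrier G \<Longrightarrow>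
           amalg_rel G H [(j, g), (j, g')] [(j, g \<otimes>\<^bsub>G\<^esub> g')]"
| one: "amalg_rel G H [(j, \<one>\<^bsub>G\<^esub>)] []"
| amalg: "h \<in> H \<Longrightarrow> amalg_rel G H [(j, h)] [(k, h)]"

definition amalg_class :: "('g, 'b) monoid_scheme \<Rightarrow> 'g set \<Rightarrow> (nat \<times> 'g) list \<Rightarrow> (nat \<times> 'g) list set" where
  "amalg_class G H w = {v. amalg_rel G H w v}"

definition amalg_free_product :: "('g, 'b) monoid_scheme \<Rightarrow> 'g set \<Rightarrow> (nat \<times> 'g) list set monoid" where
  "amalg_free_product G H =
     \<lparr>carrier = amalg_class G H ` lists (UNIV \<times> carrier G),
      monoid.mult = (\<lambda>A B. amalg_class G H ((SOME a. a \<in> A) @ (SOME b. b \<in> B))),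
      one = amalg_class G H []\<rparr>"

definition amalg_incl :: "('g, 'b) monoid_scheme \<Rightarrow> 'g set \<Rightarrow> nat \<Rightarrow> 'g \<Rightarrow> (nat \<times> 'g) list set" where
  "amalg_incl G H j g = amalg_class G H [(j, g)]"

end

theory Submission
  imports Defs
begin

text \<open>
  The embedding sends the class of a word \<open>(j\<^sub>1, x\<^sub>1) \<dots> (j\<^sub>n, x\<^sub>n)\<close> over the ultraproduct
  to the class of the sequence of words \<open>(j\<^sub>1, x\<^sub>1 i) \<dots> (j\<^sub>n, x\<^sub>n i)\<close>, each \<open>x\<^sub>k\<close> being read
  through a chosen representative sequence. Every defining relation of the amalgam over the
  ultraproduct holds in \<open>\<omega>\<close>-almost every coordinate, so this is a well-defined homomorphism.
  For injectivity we use the normal form theorem for amalgamated free products, proved with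
  van der Waerden's action on normal forms: a nontrivial element is represented by a reduced
  word, i.e. an alternating word with all letters outside \<open>H\<close>, or a single nontrivial letter.
  Lying in \<open>H\<close> and being \<open>1\<close> are decided coordinatewise in the ultraproduct, so a reduced word
  has reduced coordinates for \<open>\<omega>\<close>-almost every \<open>i\<close>, and these are nontrivial.
\<close>

section \<open>Amalgamated free products\<close>

lemma amalg_rel_append:
  "amalg_rel G H v w \<Longrightarrow> amalg_rel G H v' w' \<Longrightarrow> amalg_rel G H (v @ v') (w @ w')"
  using amalg_rel.cong[of G H v w "[]" v'] amalg_rel.cong[of G H v' w' w "[]"] amalg_rel.trans
  by fastforce

lemma amalg_rel_Cons: "amalg_rel G H v w \<Longrightarrow> amalg_rel G H (a # v) (a # w)"
  using amalg_rel_append[OF amalg_rel.refl[of G H "[a]"]] by simp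

lemma amalg_rel_lists_iff:
  assumes "amalg_rel G H v w" and "monoid G" and "H \<subseteq> carrier G"
  shows "v \<in> lists (UNIV \<times> carrier G) \<longleftrightarrow> w \<in> lists (UNIV \<times> carrier G)"
  using assms by induction (auto intro: monoid.m_closed)

lemma amalg_class_eq_iff: "amalg_class G H v = amalg_class G H w \<longleftrightarrow> amalg_rel G H v w"
proof
  assume "amalg_class G H v = amalg_class G H w"
  then show "amalg_rel G H v w"
    using amalg_rel.refl[of G H w] by (auto simp: amalg_class_def)
next
  assume "amalg_rel G H v w"
  then show "amalg_class G H v = amalg_class G H w"
    using amalg_rel.sym amalg_rel.trans unfolding amalg_class_def by blast
qed

lemma amalg_rel_some_class: "amalg_rel G H w (SOME v. v \<in> amalg_class G H w)"
  unfolding amalg_class_def by (rule someI2[of _ w]) (simp_all add: amalg_rel.refl)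

lemma carrier_amalg_free_product:
  "carrier (amalg_free_product G H) = amalg_class G H ` lists (UNIV \<times> carrier G)"
  by (simp add: amalg_free_product_def)

lemma one_amalg_free_product: "\<one>\<^bsub>amalg_free_product G H\<^esub> = amalg_class G H []"
  by (simp add: amalg_free_product_def)

lemma mult_amalg_free_product:
  "amalg_class G H v \<otimes>\<^bsub>amalg_free_product G H\<^esub> amalg_class G H w = amalg_class G H (v @ w)"
  unfolding amalg_free_product_def amalg_class_eq_iff monoid.simps
  by (rule amalg_rel.sym) (intro amalg_rel_append amalg_rel_some_class)

definition inv_word :: "('g, 'b) monoid_scheme \<Rightarrow> (nat \<times> 'g) list \<Rightarrow> (nat \<times> 'g) list" where
  "inv_word G w = rev (map (\<lambda>(j, g). (j, inv\<^bsub>G\<^esub> g)) w)"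

lemma inv_word_lists:
  "group G \<Longrightarrow> w \<in> lists (UNIV \<times> carrier G) \<Longrightarrow> inv_word G w \<in> lists (UNIV \<times> carrier G)"
  by (force simp: inv_word_def intro: group.inv_closed)

lemma amalg_rel_inv_word_append:
  assumes "group G" and "w \<in> lists (UNIV \<times> carrier G)"
  shows "amalg_rel G H (inv_word G w @ w) []"
  using assms(2)
proof (induction w)
  case Nil
  then show ?case by (simp add: inv_word_def amalg_rel.refl)
next
  case (Cons a w)
  obtain j g where a: "a = (j, g)"
    by force
  have g: "g \<in> carrier G"
    using Cons a by auto
  have "amalg_rel G H [(j, inv\<^bsub>G\<^esub> g), (j, g)] [(j, \<one>\<^bsub>G\<^esub>)]"
    using amalg_rel.mult[of "inv\<^bsub>G\<^esub> g" G g H j] g assms(1) by (simp add: group.l_inv)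
  then have "amalg_rel G H [(j, inv\<^bsub>G\<^esub> g), (j, g)] []"
    using amalg_rel.one amalg_rel.trans by blast
  then have "amalg_rel G H (inv_word G w @ [(j, inv\<^bsub>G\<^esub> g), (j, g)] @ w) (inv_word G w @ [] @ w)"
    by (intro amalg_rel.cong)
  moreover have "inv_word G (a # w) @ a # w = inv_word G w @ [(j, inv\<^bsub>G\<^esub> g), (j, g)] @ w"
    by (simp add: a inv_word_def)
  ultimately show ?case
    using Cons amalg_rel.trans by (metis append_Nil)
qed

lemma group_amalg_free_product:
  assumes "group G"
  shows "group (amalg_free_product G H)"
proof (rule groupI)
  show "x \<otimes>\<^bsub>amalg_free_product G H\<^esub> y \<in> carrier (amalg_free_product G H)"
    if "x \<in> carrier (amalg_free_product G H)" "y \<in> carrier (amalg_free_product G H)" for x y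
    using that by (auto simp: carrier_amalg_free_product mult_amalg_free_product
        intro!: imageI append_in_lists_conv[THEN iffD2])
  show "x \<otimes>\<^bsub>amalg_free_product G H\<^esub> y \<otimes>\<^bsub>amalg_free_product G H\<^esub> z =
        x \<otimes>\<^bsub>amalg_free_product G H\<^esub> (y \<otimes>\<^bsub>amalg_free_product G H\<^esub> z)"
    if "x \<in> carrier (amalg_free_product G H)" "y \<in> carrier (amalg_free_product G H)"
      and "z \<in> carrier (amalg_free_product G H)" for x y z
    using that by (auto simp: carrier_amalg_free_product mult_amalg_free_product)
  show "\<one>\<^bsub>amalg_free_product G H\<^esub> \<in> carrier (amalg_free_product G H)"
    by (auto simp: carrier_amalg_free_product one_amalg_free_product)
  show "\<one>\<^bsub>amalg_free_product G H\<^esub> \<otimes>\<^bsub>amalg_free_product G H\<^esub> x = x"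
    if "x \<in> carrier (amalg_free_product G H)" for x
    using that by (auto simp: carrier_amalg_free_product mult_amalg_free_product one_amalg_free_product)
  show "\<exists>y\<in>carrier (amalg_free_product G H). y \<otimes>\<^bsub>amalg_free_product G H\<^esub> x = \<one>\<^bsub>amalg_free_product G H\<^esub>"
    if x: "x \<in> carrier (amalg_free_product G H)" for x
  proof -
    obtain w where w: "w \<in> lists (UNIV \<times> carrier G)" "x = amalg_class G H w"
      using x by (auto simp: carrier_amalg_free_product)
    then have "amalg_class G H (inv_word G w) \<otimes>\<^bsub>amalg_free_product G H\<^esub> x = \<one>\<^bsub>amalg_free_product G H\<^esub>"
      using amalg_rel_inv_word_append[OF assms w(1)]
      by (simp add: mult_amalg_free_product one_amalg_free_product amalg_class_eq_iff)
    then show ?thesis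
      using inv_word_lists[OF assms w(1)] by (auto simp: carrier_amalg_free_product)
  qed
qed

section \<open>The normal form theorem\<close>

definition starts_in :: "nat \<Rightarrow> (nat \<times> 'g) list \<Rightarrow> bool" where
  "starts_in j L \<longleftrightarrow> L \<noteq> [] \<and> fst (hd L) = j"

definition reduced :: "('g, 'b) monoid_scheme \<Rightarrow> 'g set \<Rightarrow> (nat \<times> 'g) list \<Rightarrow> bool" where
  "reduced G H r \<longleftrightarrow> r \<in> lists (UNIV \<times> carrier G) \<and> r \<noteq> [] \<and>
     successively (\<lambda>x y. fst x \<noteq> fst y) r \<and>
     ((\<forall>x\<in>set r. snd x \<notin> H) \<or> (\<exists>j g. r = [(j, g)] \<and> g \<noteq> \<one>\<^bsub>G\<^esub>))"

locale amalgam = group G for G (structure) +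
  fixes H
  assumes subgroup_H: "subgroup H G"
begin

lemma H_closed: "h \<in> H \<Longrightarrow> h \<in> carrier G"
  using subgroup.mem_carrier[OF subgroup_H] .

lemma H_mult_in_H_iff: "h \<in> H \<Longrightarrow> x \<in> carrier G \<Longrightarrow> h \<otimes> x \<in> H \<longleftrightarrow> x \<in> H"
  using subgroup.m_closed[OF subgroup_H] subgroup.m_inv_closed[OF subgroup_H]
  by (metis H_closed inv_closed inv_solve_left)

lemma mult_H_in_H_iff: "h \<in> H \<Longrightarrow> x \<in> carrier G \<Longrightarrow> x \<otimes> h \<in> H \<longleftrightarrow> x \<in> H"
  using subgroup.m_closed[OF subgroup_H] subgroup.m_inv_closed[OF subgroup_H]
  by (metis H_closed inv_closed inv_solve_right)

lemma rcos_eq_H_iff: "x \<in> carrier G \<Longrightarrow> H #> x = H \<longleftrightarrow> x \<in> H"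
  using coset_join2 rcos_self subgroup_H by metis

lemma rcos_H_mult: "h \<in> H \<Longrightarrow> x \<in> carrier G \<Longrightarrow> H #> (h \<otimes> x) = H #> x"
  using coset_mult_assoc[of H h x] subgroup.rcos_const[OF subgroup_H is_group]
    subgroup.subset[OF subgroup_H] H_closed by simp

definition coset_rep :: "'a \<Rightarrow> 'a" where
  "coset_rep x = (if H #> x = H then \<one> else (SOME t. t \<in> H #> x))"

definition H_part :: "'a \<Rightarrow> 'a" where
  "H_part x = x \<otimes> inv (coset_rep x)"

lemma coset_rep_cong: "H #> x = H #> y \<Longrightarrow> coset_rep x = coset_rep y"
  by (simp add: coset_rep_def)

lemma coset_rep_in_rcos: "x \<in> carrier G \<Longrightarrow> coset_rep x \<in> H #> x"
  using someI[of "\<lambda>t. t \<in> H #> x" x] rcos_self[OF _ subgroup_H] subgroup.one_closed[OF subgroup_H]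
  by (auto simp: coset_rep_def)

lemma coset_rep_closed: "x \<in> carrier G \<Longrightarrow> coset_rep x \<in> carrier G"
  using coset_rep_in_rcos subgroup.elemrcos_carrier[OF subgroup_H is_group] by blast

lemma rcos_coset_rep: "x \<in> carrier G \<Longrightarrow> H #> coset_rep x = H #> x"
  using repr_independence[OF coset_rep_in_rcos _ subgroup_H] by simp

lemma coset_rep_coset_rep: "x \<in> carrier G \<Longrightarrow> coset_rep (coset_rep x) = coset_rep x"
  by (rule coset_rep_cong[OF rcos_coset_rep])

lemma coset_rep_H_mult: "h \<in> H \<Longrightarrow> x \<in> carrier G \<Longrightarrow> coset_rep (h \<otimes> x) = coset_rep x"
  by (rule coset_rep_cong[OF rcos_H_mult])

lemma coset_rep_in_H_iff: "x \<in> carrier G \<Longrightarrow> coset_rep x \<in> H \<longleftrightarrow> x \<in> H"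
  using rcos_coset_rep rcos_eq_H_iff coset_rep_closed by metis

lemma H_part_in_H: assumes "x \<in> carrier G" shows "H_part x \<in> H"
proof -
  have "coset_rep x \<otimes> inv x \<in> H"
    using subgroup.rcos_module_imp[OF subgroup_H is_group assms coset_rep_in_rcos[OF assms]] .
  then have "inv (coset_rep x \<otimes> inv x) \<in> H"
    using subgroup.m_inv_closed[OF subgroup_H] by blast
  then show ?thesis
    using assms coset_rep_closed[OF assms] by (simp add: H_part_def inv_mult_group)
qed

lemma H_part_mult_coset_rep: "x \<in> carrier G \<Longrightarrow> H_part x \<otimes> coset_rep x = x"
  by (simp add: H_part_def m_assoc coset_rep_closed)

lemma H_part_H_mult:
  "h \<in> H \<Longrightarrow> t \<in> carrier G \<Longrightarrow> coset_rep t = t \<Longrightarrow> H_part (h \<otimes> t) = h"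
  by (simp add: H_part_def coset_rep_H_mult m_assoc H_closed)

text \<open>
  A normal form \<open>(h, [(j\<^sub>1, t\<^sub>1), \<dots>, (j\<^sub>n, t\<^sub>n)])\<close> stands for the word \<open>h t\<^sub>1 \<dots> t\<^sub>n\<close>: \<open>h \<in> H\<close>,
  consecutive copies differ, and each \<open>t\<^sub>k\<close> is the chosen representative of a coset \<open>H t\<^sub>k \<noteq> H\<close>.
  The \<open>j\<close>-th copy of \<open>G\<close> acts on normal forms by \<open>act j\<close>; this action satisfies all defining
  relations, so related words act alike, while a reduced word visibly acts nontrivially.
\<close>

definition nf_tail :: "(nat \<times> 'a) list \<Rightarrow> bool" where
  "nf_tail L \<longleftrightarrow> successively (\<lambda>x y. fst x \<noteq> fst y) L \<and>
     (\<forall>(j, t)\<in>set L. t \<in> carrier G \<and> coset_rep t = t \<and> t \<notin> H)"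

definition normal_forms :: "('a \<times> (nat \<times> 'a) list) set" where
  "normal_forms = {(h, L). h \<in> H \<and> nf_tail L}"

fun pop :: "nat \<Rightarrow> 'a \<times> (nat \<times> 'a) list \<Rightarrow> 'a \<times> (nat \<times> 'a) list" where
  "pop j (h, (k, t) # L) = (if k = j then (h \<otimes> t, L) else (h, (k, t) # L))"
| "pop j (h, []) = (h, [])"

definition push :: "nat \<Rightarrow> 'a \<Rightarrow> (nat \<times> 'a) list \<Rightarrow> 'a \<times> (nat \<times> 'a) list" where
  "push j y L = (if y \<in> H then (y, L) else (H_part y, (j, coset_rep y) # L))"

definition act :: "nat \<Rightarrow> 'a \<Rightarrow> 'a \<times> (nat \<times> 'a) list \<Rightarrow> 'a \<times> (nat \<times> 'a) list" where
  "act j g s = push j (g \<otimes> fst (pop j s)) (snd (pop j s))"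

lemma nf_tail_Cons: "nf_tail (x # L) \<Longrightarrow> nf_tail L"
  by (auto simp: nf_tail_def successively_Cons)

lemma pop_not_starts: "\<not> starts_in j L \<Longrightarrow> pop j (h, L) = (h, L)"
  by (cases L) (auto simp: starts_in_def)

lemma pop_normal_form:
  assumes "s \<in> normal_forms"
  shows "fst (pop j s) \<in> carrier G" and "nf_tail (snd (pop j s))"
    and "\<not> starts_in j (snd (pop j s))"
proof -
  obtain h L where s: "s = (h, L)" "h \<in> H" "nf_tail L"
    using assms by (auto simp: normal_forms_def)
  have "fst (pop j s) \<in> carrier G \<and> nf_tail (snd (pop j s)) \<and> \<not> starts_in j (snd (pop j s))"
  proof (cases "starts_in j L")
    case True
    then obtain t L' where L: "L = (j, t) # L'"
      by (cases L) (auto simp: starts_in_def)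
    then show ?thesis
      using s nf_tail_Cons[of "(j, t)" L'] H_closed
      by (cases L') (auto simp: nf_tail_def starts_in_def)
  next
    case False
    then show ?thesis
      using s H_closed by (simp add: pop_not_starts)
  qed
  then show "fst (pop j s) \<in> carrier G" "nf_tail (snd (pop j s))" "\<not> starts_in j (snd (pop j s))"
    by auto
qed

lemma push_normal_form:
  assumes "y \<in> carrier G" "nf_tail L" "\<not> starts_in j L"
  shows "push j y L \<in> normal_forms"
  using assms H_part_in_H coset_rep_closed coset_rep_coset_rep coset_rep_in_H_iff
  by (cases L) (auto simp: push_def normal_forms_def nf_tail_def starts_in_def)

lemma pop_push: "y \<in> carrier G \<Longrightarrow> \<not> starts_in j L \<Longrightarrow> pop j (push j y L) = (y, L)"
  by (simp add: push_def pop_not_starts H_part_mult_coset_rep)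

lemma act_closed: "g \<in> carrier G \<Longrightarrow> s \<in> normal_forms \<Longrightarrow> act j g s \<in> normal_forms"
  unfolding act_def using pop_normal_form by (intro push_normal_form) auto

lemma act_act:
  assumes "g \<in> carrier G" "g' \<in> carrier G" "s \<in> normal_forms"
  shows "act j g (act j g' s) = act j (g \<otimes> g') s"
  using pop_normal_form[OF assms(3)] assms
  by (simp add: act_def pop_push m_assoc)

lemma act_H:
  assumes "h \<in> H" "s \<in> normal_forms"
  shows "act j h s = (h \<otimes> fst s, snd s)"
proof -
  obtain h0 L where s: "s = (h0, L)" "h0 \<in> H" "nf_tail L"
    using assms(2) by (auto simp: normal_forms_def)
  have hh0: "h \<otimes> h0 \<in> H"
    using assms(1) s(2) subgroup.m_closed[OF subgroup_H] by blast
  show ?thesis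
  proof (cases "starts_in j L")
    case True
    then obtain t L' where L: "L = (j, t) # L'"
      by (cases L) (auto simp: starts_in_def)
    have t: "t \<in> carrier G" "coset_rep t = t" "t \<notin> H"
      using s(3) L by (auto simp: nf_tail_def)
    have "h \<otimes> (h0 \<otimes> t) = (h \<otimes> h0) \<otimes> t"
      using assms(1) s(2) t(1) H_closed by (simp add: m_assoc)
    moreover have "(h \<otimes> h0) \<otimes> t \<notin> H"
      using H_mult_in_H_iff[OF hh0 t(1)] t(3) by simp
    ultimately show ?thesis
      using s L t hh0 by (simp add: act_def push_def coset_rep_H_mult H_part_H_mult H_closed)
  next
    case False
    then show ?thesis
      using s hh0 by (simp add: act_def push_def pop_not_starts)
  qed
qed

definition act_word :: "(nat \<times> 'a) list \<Rightarrow> 'a \<times> (nat \<times> 'a) list \<Rightarrow> 'a \<times> (nat \<times> 'a) list" where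
  "act_word w s = foldr (\<lambda>(j, g). act j g) w s"

lemma act_word_Nil [simp]: "act_word [] s = s"
  by (simp add: act_word_def)

lemma act_word_Cons [simp]: "act_word ((j, g) # w) s = act j g (act_word w s)"
  by (simp add: act_word_def)

lemma act_word_append: "act_word (v @ w) s = act_word v (act_word w s)"
  by (simp add: act_word_def)

lemma act_word_closed:
  "w \<in> lists (UNIV \<times> carrier G) \<Longrightarrow> s \<in> normal_forms \<Longrightarrow> act_word w s \<in> normal_forms"
  by (induction w) (auto intro: act_closed)

lemma act_word_amalg_rel:
  assumes "amalg_rel G H v w" "v \<in> lists (UNIV \<times> carrier G)" "s \<in> normal_forms"
  shows "act_word v s = act_word w s"
  using assms
proof (induction arbitrary: s)
  case (sym v w)
  then show ?case
    using amalg_rel_lists_iff[OF sym.hyps is_monoid subgroup.subset[OF subgroup_H]] by metis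
next
  case (trans u v w)
  then show ?case
    using amalg_rel_lists_iff[OF trans.hyps(1) is_monoid subgroup.subset[OF subgroup_H]] by metis
next
  case (cong v w x y)
  then show ?case
    using act_word_closed[of y s] by (simp add: act_word_append)
next
  case (mult g g' j)
  then show ?case
    by (simp add: act_act)
next
  case (one j)
  then show ?case
    using act_H[OF subgroup.one_closed[OF subgroup_H]] by (auto simp: normal_forms_def H_closed)
next
  case (amalg h j k)
  then show ?case
    by (simp add: act_H)
qed simp

text \<open>The first letter lies in \<open>H\<close>, so the copy \<open>0\<close> chosen for it is immaterial.\<close>

definition nf_word :: "'a \<times> (nat \<times> 'a) list \<Rightarrow> (nat \<times> 'a) list" where
  "nf_word s = (0, fst s) # snd s"

lemma amalg_rel_nf_word_pop:
  assumes "s \<in> normal_forms"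
  shows "amalg_rel G H (nf_word s) ((j, fst (pop j s)) # snd (pop j s))"
proof -
  obtain h L where s: "s = (h, L)" "h \<in> H"
    using assms by (auto simp: normal_forms_def)
  have moved: "amalg_rel G H (nf_word s) ((j, h) # L)"
    using amalg_rel_append[OF amalg_rel.amalg[OF s(2), of G 0 j] amalg_rel.refl[of G H L]] s
    by (simp add: nf_word_def)
  show ?thesis
  proof (cases "starts_in j L")
    case True
    then obtain t L' where L: "L = (j, t) # L'"
      by (cases L) (auto simp: starts_in_def)
    have "t \<in> carrier G"
      using assms s L by (auto simp: normal_forms_def nf_tail_def)
    then have "amalg_rel G H ((j, h) # L) ((j, h \<otimes> t) # L')"
      using amalg_rel_append[OF amalg_rel.mult[OF H_closed[OF s(2)], of t H j] amalg_rel.refl[of G H L']] L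
      by simp
    then show ?thesis
      using moved s L amalg_rel.trans by fastforce
  next
    case False
    then show ?thesis
      using moved s by (simp add: pop_not_starts)
  qed
qed

lemma amalg_rel_push_nf_word:
  assumes "y \<in> carrier G"
  shows "amalg_rel G H ((j, y) # L) (nf_word (push j y L))"
proof (cases "y \<in> H")
  case True
  then show ?thesis
    using amalg_rel_append[OF amalg_rel.amalg[OF True, of G j 0] amalg_rel.refl[of G H L]]
    by (simp add: push_def nf_word_def)
next
  case False
  have "amalg_rel G H [(j, H_part y), (j, coset_rep y)] [(j, y)]"
    using amalg_rel.mult[OF H_closed[OF H_part_in_H] coset_rep_closed, OF assms assms, of H j]
    by (simp add: H_part_mult_coset_rep assms)
  moreover have "amalg_rel G H [(j, H_part y)] [(0, H_part y)]"
    using amalg_rel.amalg[OF H_part_in_H[OF assms]] .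
  ultimately have "amalg_rel G H [(j, y)] [(0, H_part y), (j, coset_rep y)]"
    using amalg_rel_append[of G H "[(j, H_part y)]" "[(0, H_part y)]" "[(j, coset_rep y)]"]
      amalg_rel.refl amalg_rel.sym amalg_rel.trans by fastforce
  then show ?thesis
    using amalg_rel_append[OF _ amalg_rel.refl[of G H L]] False
    by (fastforce simp: push_def nf_word_def)
qed

lemma amalg_rel_act_nf_word:
  assumes "s \<in> normal_forms" "g \<in> carrier G"
  shows "amalg_rel G H ((j, g) # nf_word s) (nf_word (act j g s))"
proof -
  let ?y = "fst (pop j s)" and ?L = "snd (pop j s)"
  have y: "?y \<in> carrier G"
    using pop_normal_form[OF assms(1)] by simp
  have "amalg_rel G H ((j, g) # nf_word s) ((j, g) # (j, ?y) # ?L)"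
    using amalg_rel_Cons[OF amalg_rel_nf_word_pop[OF assms(1)]] .
  moreover have "amalg_rel G H ((j, g) # (j, ?y) # ?L) ((j, g \<otimes> ?y) # ?L)"
    using amalg_rel_append[OF amalg_rel.mult[OF assms(2) y, of H j] amalg_rel.refl[of G H ?L]] by simp
  moreover have "amalg_rel G H ((j, g \<otimes> ?y) # ?L) (nf_word (act j g s))"
    unfolding act_def using amalg_rel_push_nf_word assms y by simp
  ultimately show ?thesis
    using amalg_rel.trans by metis
qed

lemma one_Nil_normal_form: "(\<one>, []) \<in> normal_forms"
  by (simp add: normal_forms_def nf_tail_def subgroup.one_closed[OF subgroup_H])

lemma amalg_rel_nf_word_act_word:
  assumes "w \<in> lists (UNIV \<times> carrier G)"
  shows "amalg_rel G H w (nf_word (act_word w (\<one>, [])))"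
  using assms
proof (induction w)
  case Nil
  show ?case
    using amalg_rel.sym[OF amalg_rel.one] by (simp add: nf_word_def)
next
  case (Cons a w)
  obtain j g where a: "a = (j, g)"
    by force
  have "g \<in> carrier G" "w \<in> lists (UNIV \<times> carrier G)"
    using Cons a by auto
  then show ?case
    using amalg_rel_Cons[OF Cons.IH, of a]
      amalg_rel_act_nf_word[OF act_word_closed[OF _ one_Nil_normal_form]] a amalg_rel.trans
    by fastforce
qed

lemma act_starts_in:
  assumes "s \<in> normal_forms" "g \<in> carrier G" "g \<notin> H" "\<not> starts_in j (snd s)"
  shows "starts_in j (snd (act j g s))"
proof -
  obtain h L where s: "s = (h, L)" "h \<in> H"
    using assms(1) by (auto simp: normal_forms_def)
  have "g \<otimes> h \<notin> H"
    using mult_H_in_H_iff[OF s(2) assms(2)] assms(3) by simp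
  then show ?thesis
    using s assms(4) by (simp add: act_def push_def pop_not_starts starts_in_def)
qed

lemma act_word_starts_in:
  assumes "r \<in> lists (UNIV \<times> (carrier G - H))" "r \<noteq> []"
    and "successively (\<lambda>x y. fst x \<noteq> fst y) r"
  shows "starts_in (fst (hd r)) (snd (act_word r (\<one>, [])))"
  using assms
proof (induction r rule: induct_list012)
  case (2 x)
  then show ?case
    using act_starts_in[OF one_Nil_normal_form] by (cases x) (auto simp: starts_in_def)
next
  case (3 x y r)
  obtain j g k g' where xy: "x = (j, g)" "y = (k, g')"
    by force
  have "act_word (y # r) (\<one>, []) \<in> normal_forms"
    using "3.prems"(1) by (intro act_word_closed one_Nil_normal_form) auto
  moreover have "\<not> starts_in j (snd (act_word (y # r) (\<one>, [])))"
    using "3.IH"(2) "3.prems" xy by (auto simp: starts_in_def)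
  ultimately show ?case
    using act_starts_in "3.prems"(1) xy by auto
qed simp

lemma reduced_not_trivial: "reduced G H r \<Longrightarrow> \<not> amalg_rel G H r []"
proof
  assume red: "reduced G H r" and triv: "amalg_rel G H r []"
  then have act_r: "act_word r (\<one>, []) = (\<one>, [])"
    using act_word_amalg_rel[OF triv _ one_Nil_normal_form] by (simp add: reduced_def)
  show False
  proof (cases "\<forall>x\<in>set r. snd x \<notin> H")
    case True
    then have "r \<in> lists (UNIV \<times> (carrier G - H))"
      using red by (auto simp: reduced_def)
    then show False
      using act_word_starts_in act_r red by (fastforce simp: reduced_def starts_in_def)
  next
    case False
    then obtain j g where "r = [(j, g)]" "g \<noteq> \<one>" "g \<in> H"
      using red by (auto simp: reduced_def)
    then show False
      using act_r act_H[OF \<open>g \<in> H\<close> one_Nil_normal_form, of j] H_closed by simp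
  qed
qed

lemma trivial_or_reduced:
  assumes "w \<in> lists (UNIV \<times> carrier G)"
  shows "amalg_rel G H w [] \<or> (\<exists>r. reduced G H r \<and> amalg_rel G H w r)"
proof -
  obtain h L where s: "act_word w (\<one>, []) = (h, L)" "h \<in> H" "nf_tail L"
    using act_word_closed[OF assms one_Nil_normal_form] by (auto simp: normal_forms_def)
  have w_rel: "amalg_rel G H w (nf_word (h, L))"
    using amalg_rel_nf_word_act_word[OF assms] s(1) by simp
  show ?thesis
  proof (cases L)
    case Nil
    show ?thesis
    proof (cases "h = \<one>")
      case True
      then show ?thesis
        using w_rel Nil amalg_rel.trans[OF _ amalg_rel.one[of G H 0]] by (simp add: nf_word_def)
    next
      case False
      then have "reduced G H [(0, h)]"
        using H_closed[OF s(2)] by (simp add: reduced_def)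
      then show ?thesis
        using w_rel Nil by (auto simp: nf_word_def)
    qed
  next
    case (Cons a L')
    obtain j t where a: "a = (j, t)"
      by force
    have t: "t \<in> carrier G" "t \<notin> H"
      using s(3) Cons a by (auto simp: nf_tail_def)
    have "amalg_rel G H w ((j, h \<otimes> t) # L')"
      using amalg_rel.trans[OF w_rel amalg_rel_nf_word_pop[of "(h, L)" j]] s Cons a
      by (simp add: normal_forms_def)
    moreover have "reduced G H ((j, h \<otimes> t) # L')"
      using s(3) Cons a t H_mult_in_H_iff[OF s(2) t(1)] H_closed[OF s(2)]
      by (cases L') (auto simp: reduced_def nf_tail_def)
    ultimately show ?thesis
      by blast
  qed
qed

end

section \<open>Ultraproducts of groups\<close>

locale set_ultrafilter =
  fixes U :: "'i set set"
  assumes UNIV_mem: "UNIV \<in> U"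
    and empty_not_mem: "{} \<notin> U"
    and superset_mem: "A \<in> U \<Longrightarrow> A \<subseteq> B \<Longrightarrow> B \<in> U"
    and Int_mem: "A \<in> U \<Longrightarrow> B \<in> U \<Longrightarrow> A \<inter> B \<in> U"
    and mem_or_Compl_mem: "A \<in> U \<or> - A \<in> U"
begin

lemma Int_subset_mem: "A \<in> U \<Longrightarrow> B \<in> U \<Longrightarrow> A \<inter> B \<subseteq> C \<Longrightarrow> C \<in> U"
  using Int_mem superset_mem by blast

lemma Collect_not_mem_iff: "{i. \<not> P i} \<in> U \<longleftrightarrow> {i. P i} \<notin> U"
proof -
  have "{i. P i} \<inter> {i. \<not> P i} = {}" and "- {i. P i} = {i. \<not> P i}"
    by auto
  then show ?thesis
    using mem_or_Compl_mem[of "{i. P i}"] Int_mem[of "{i. P i}" "{i. \<not> P i}"] empty_not_mem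
    by auto
qed

lemma mem_nonempty: "A \<in> U \<Longrightarrow> A \<noteq> {}"
  using empty_not_mem by blast

lemma finite_Ball_mem:
  "finite S \<Longrightarrow> (\<And>x. x \<in> S \<Longrightarrow> {i. P x i} \<in> U) \<Longrightarrow> {i. \<forall>x\<in>S. P x i} \<in> U"
proof (induction S rule: finite_induct)
  case (insert a S)
  then show ?case
    using Int_mem[of "{i. P a i}" "{i. \<forall>x\<in>S. P x i}"] by (simp add: Collect_conj_eq[symmetric])
qed (simp add: UNIV_mem)

end

lemma free_ultrafilter_imp_set_ultrafilter: "free_ultrafilter U \<Longrightarrow> set_ultrafilter U"
  by (simp add: free_ultrafilter_def set_ultrafilter_def)

locale group_ultraproduct = set_ultrafilter U for U :: "nat set set" +
  fixes G :: "nat \<Rightarrow> ('g, 'b) monoid_scheme"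
  assumes group_G: "\<And>i. group (G i)"
begin

abbreviation PG :: "(nat \<Rightarrow> 'g) monoid" where
  "PG \<equiv> product_group UNIV G"

lemma carrier_PG_iff [simp]: "f \<in> carrier PG \<longleftrightarrow> (\<forall>i. f i \<in> carrier (G i))"
  by (simp add: PiE_UNIV_domain Pi_iff)

lemma mult_PG [simp]: "f \<otimes>\<^bsub>PG\<^esub> g = (\<lambda>i. f i \<otimes>\<^bsub>G i\<^esub> g i)"
  by (simp add: restrict_UNIV)

lemma one_PG [simp]: "\<one>\<^bsub>PG\<^esub> = (\<lambda>i. \<one>\<^bsub>G i\<^esub>)"
  by (simp add: restrict_UNIV)

lemma inv_PG [simp]: "f \<in> carrier PG \<Longrightarrow> inv\<^bsub>PG\<^esub> f = (\<lambda>i. inv\<^bsub>G i\<^esub> f i)"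
  using inv_product_group[of f UNIV G] group_G by (simp add: restrict_UNIV)

lemmas component_group_simps [simp] =
  monoid.one_closed[OF group.is_monoid[OF group_G]]
  monoid.m_closed[OF group.is_monoid[OF group_G]]
  group.inv_closed[OF group_G]
  monoid.l_one[OF group.is_monoid[OF group_G]]
  monoid.r_one[OF group.is_monoid[OF group_G]]
  monoid.inv_one[OF group.is_monoid[OF group_G]]
  group.r_inv[OF group_G]

text \<open>The pointwise forms above replace the \<open>PiE\<close>/\<open>restrict\<close> forms of the library.\<close>

declare carrier_product_group [simp del] mult_product_group [simp del]
  one_product_group [simp del] inv_product_group [simp del]

lemma group_PG: "group PG"
  using group_G by (simp add: product_group)

lemma ultra_null_iff:
  "f \<in> ultra_null G U \<longleftrightarrow> (\<forall>i. f i \<in> carrier (G i)) \<and> {i. f i = \<one>\<^bsub>G i\<^esub>} \<in> U"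
  by (simp add: ultra_null_def del: carrier_product_group)

lemma ultra_nullI:
  "f \<in> carrier PG \<Longrightarrow> A \<in> U \<Longrightarrow> A \<subseteq> {i. f i = \<one>\<^bsub>G i\<^esub>} \<Longrightarrow> f \<in> ultra_null G U"
  using superset_mem by (auto simp: ultra_null_iff)

lemma ultra_null_normal: "ultra_null G U \<lhd> PG"
  unfolding group.normal_inv_iff[OF group_PG]
proof (intro conjI ballI group.subgroupI[OF group_PG])
  show "ultra_null G U \<subseteq> carrier PG"
    by (auto simp: ultra_null_iff)
  show "ultra_null G U \<noteq> {}"
    using ultra_nullI[OF _ UNIV_mem, of "\<lambda>i. \<one>\<^bsub>G i\<^esub>"] by auto
next
  fix a b
  assume a: "a \<in> ultra_null G U" and b: "b \<in> ultra_null G U"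
  then show "inv\<^bsub>PG\<^esub> a \<in> ultra_null G U"
    by (intro ultra_nullI[of _ "{i. a i = \<one>\<^bsub>G i\<^esub>}"]) (auto simp: ultra_null_iff)
  show "a \<otimes>\<^bsub>PG\<^esub> b \<in> ultra_null G U"
    using a b by (intro ultra_nullI[of _ "{i. a i = \<one>\<^bsub>G i\<^esub>} \<inter> {i. b i = \<one>\<^bsub>G i\<^esub>}"])
      (auto simp: ultra_null_iff intro: Int_mem)
next
  fix x h
  assume "x \<in> carrier PG" "h \<in> ultra_null G U"
  then show "x \<otimes>\<^bsub>PG\<^esub> h \<otimes>\<^bsub>PG\<^esub> inv\<^bsub>PG\<^esub> x \<in> ultra_null G U"
    by (intro ultra_nullI[of _ "{i. h i = \<one>\<^bsub>G i\<^esub>}"]) (auto simp: ultra_null_iff)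
qed

lemma group_ultraprod: "group (ultraprod G U)"
  unfolding ultraprod_def using normal.factorgroup_is_group[OF ultra_null_normal] .

lemma ultra_class_hom: "ultra_class G U \<in> hom PG (ultraprod G U)"
  unfolding ultraprod_def ultra_class_def[abs_def]
  using normal.r_coset_hom_Mod[OF ultra_null_normal] .

sublocale ultra_class: group_hom PG "ultraprod G U" "ultra_class G U"
  using group_PG group_ultraprod ultra_class_hom by (simp add: group_hom_def group_hom_axioms_def)

lemma carrier_ultraprod: "carrier (ultraprod G U) = ultra_class G U ` carrier PG"
  by (simp add: ultraprod_def ultra_class_def[abs_def] carrier_FactGroup)

lemma ultra_class_eq_iff:
  assumes "f \<in> carrier PG" "g \<in> carrier PG"
  shows "ultra_class G U f = ultra_class G U g \<longleftrightarrow> {i. f i = g i} \<in> U"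
proof -
  interpret N: normal "ultra_null G U" PG
    by (rule ultra_null_normal)
  have "ultra_class G U f = ultra_class G U g \<longleftrightarrow> f \<in> ultra_null G U #>\<^bsub>PG\<^esub> g"
    unfolding ultra_class_def
    using assms group.repr_independence[OF group_PG _ _ N.subgroup_axioms]
      group.rcos_self[OF group_PG _ N.subgroup_axioms]
    by blast
  also have "\<dots> \<longleftrightarrow> f \<otimes>\<^bsub>PG\<^esub> inv\<^bsub>PG\<^esub> g \<in> ultra_null G U"
    using N.rcos_module[OF group_PG] assms by blast
  also have "\<dots> \<longleftrightarrow> {i. f i = g i} \<in> U"
    using assms by (simp add: ultra_null_iff group.inv_solve_right'[OF group_G])
  finally show ?thesis .
qed

lemma ultra_class_mult:
  "f \<in> carrier PG \<Longrightarrow> g \<in> carrier PG \<Longrightarrow>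
   ultra_class G U f \<otimes>\<^bsub>ultraprod G U\<^esub> ultra_class G U g = ultra_class G U (\<lambda>i. f i \<otimes>\<^bsub>G i\<^esub> g i)"
  using ultra_class.hom_mult by simp

lemma one_ultraprod: "\<one>\<^bsub>ultraprod G U\<^esub> = ultra_class G U (\<lambda>i. \<one>\<^bsub>G i\<^esub>)"
  using ultra_class.hom_one by simp

definition ultra_rep :: "(nat \<Rightarrow> 'g) set \<Rightarrow> nat \<Rightarrow> 'g" where
  "ultra_rep x = (SOME f. f \<in> carrier PG \<and> x = ultra_class G U f)"

lemma ultra_rep:
  assumes "x \<in> carrier (ultraprod G U)"
  shows "ultra_rep x \<in> carrier PG" and "ultra_class G U (ultra_rep x) = x"
proof -
  have "\<exists>f. f \<in> carrier PG \<and> x = ultra_class G U f"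
    using assms carrier_ultraprod by blast
  then have "ultra_rep x \<in> carrier PG \<and> x = ultra_class G U (ultra_rep x)"
    unfolding ultra_rep_def by (rule someI_ex)
  then show "ultra_rep x \<in> carrier PG" "ultra_class G U (ultra_rep x) = x"
    by auto
qed

lemma ultra_rep_closed: "x \<in> carrier (ultraprod G U) \<Longrightarrow> ultra_rep x i \<in> carrier (G i)"
  using ultra_rep(1) by simp

lemma ultra_rep_ultra_class:
  "f \<in> carrier PG \<Longrightarrow> {i. ultra_rep (ultra_class G U f) i = f i} \<in> U"
  using ultra_class_eq_iff ultra_rep ultra_class.hom_closed by metis

lemma ultra_rep_mult:
  assumes "x \<in> carrier (ultraprod G U)" "y \<in> carrier (ultraprod G U)"
  shows "{i. ultra_rep (x \<otimes>\<^bsub>ultraprod G U\<^esub> y) i = ultra_rep x i \<otimes>\<^bsub>G i\<^esub> ultra_rep y i} \<in> U"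
  using ultra_rep_ultra_class[of "\<lambda>i. ultra_rep x i \<otimes>\<^bsub>G i\<^esub> ultra_rep y i"]
    ultra_class_mult[OF ultra_rep(1)[OF assms(1)] ultra_rep(1)[OF assms(2)]] assms
  by (simp add: ultra_rep ultra_rep_closed)

lemma ultra_rep_one: "{i. ultra_rep \<one>\<^bsub>ultraprod G U\<^esub> i = \<one>\<^bsub>G i\<^esub>} \<in> U"
  using ultra_rep_ultra_class[of "\<lambda>i. \<one>\<^bsub>G i\<^esub>"] by (simp add: one_ultraprod)

lemma ultra_rep_neq_one:
  assumes "x \<in> carrier (ultraprod G U)" "x \<noteq> \<one>\<^bsub>ultraprod G U\<^esub>"
  shows "{i. ultra_rep x i \<noteq> \<one>\<^bsub>G i\<^esub>} \<in> U"
  using assms ultra_class_eq_iff[OF ultra_rep(1)[OF assms(1)], of "\<lambda>i. \<one>\<^bsub>G i\<^esub>"]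
  by (simp add: Collect_not_mem_iff ultra_rep one_ultraprod)

end

section \<open>The embedding\<close>

locale ultraproduct_amalgam =
  fixes G :: "nat \<Rightarrow> ('g, 'b) monoid_scheme" and H :: "nat \<Rightarrow> 'g set" and U :: "nat set set"
  assumes group_G: "\<And>i. group (G i)"
    and subgroup_H: "\<And>i. subgroup (H i) (G i)"
    and ultrafilter_U: "set_ultrafilter U"
begin

abbreviation GU where "GU \<equiv> ultraprod G U"
abbreviation HU where "HU \<equiv> ultraprod_sub G H U"
abbreviation FP where "FP i \<equiv> amalg_free_product (G i) (H i)"

sublocale UG: group_ultraproduct U G
  using ultrafilter_U group_G by (simp add: group_ultraproduct_def group_ultraproduct_axioms_def)

sublocale UFP: group_ultraproduct U FP
  using ultrafilter_U group_G by (simp add: group_ultraproduct_def group_ultraproduct_axioms_def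
      group_amalg_free_product)

lemma amalgam_component: "amalgam (G i) (H i)"
  using group_G subgroup_H by (simp add: amalgam_def amalgam_axioms_def)

lemma ultraprod_sub_image: "HU = ultra_class G U ` (\<Pi>\<^sub>E i\<in>UNIV. H i)"
  by (auto simp: ultraprod_sub_def)

lemma subgroup_ultraprod_sub: "subgroup HU GU"
  using PiE_subgroup_product_group[of UNIV G H] group_G subgroup_H ultraprod_sub_image
    UG.ultra_class.subgroup_img_is_subgroup by simp

lemma amalgam_ultraprod: "amalgam GU HU"
  using UG.group_ultraprod subgroup_ultraprod_sub by (simp add: amalgam_def amalgam_axioms_def)

lemma ultra_class_in_ultraprod_sub:
  assumes "f \<in> carrier UG.PG" "{i. f i \<in> H i} \<in> U"
  shows "ultra_class G U f \<in> HU"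
proof -
  define h where "h i = (if f i \<in> H i then f i else \<one>\<^bsub>G i\<^esub>)" for i
  have h: "\<forall>i. h i \<in> H i"
    unfolding h_def using subgroup.one_closed[OF subgroup_H] by simp
  then have "ultra_class G U h = ultra_class G U f"
    using UG.ultra_class_eq_iff assms subgroup.mem_carrier[OF subgroup_H]
    by (auto simp: h_def elim!: UG.superset_mem)
  then show ?thesis
    using h unfolding ultraprod_sub_def by blast
qed

lemma ultra_rep_not_in_sub:
  assumes "x \<in> carrier GU" "x \<notin> HU"
  shows "{i. UG.ultra_rep x i \<notin> H i} \<in> U"
  using ultra_class_in_ultraprod_sub[OF UG.ultra_rep(1)] UG.ultra_rep(2) assms
  by (metis UG.Collect_not_mem_iff)

definition word_component :: "nat \<Rightarrow> (nat \<times> (nat \<Rightarrow> 'g) set) list \<Rightarrow> (nat \<times> 'g) list" where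
  "word_component i w = map (\<lambda>(j, x). (j, UG.ultra_rep x i)) w"

lemma word_component_lists:
  "w \<in> lists (UNIV \<times> carrier GU) \<Longrightarrow> word_component i w \<in> lists (UNIV \<times> carrier (G i))"
  by (fastforce simp: word_component_def intro: UG.ultra_rep_closed)

lemma word_component_append: "word_component i (v @ w) = word_component i v @ word_component i w"
  by (simp add: word_component_def)

lemma eventually_amalg_rel_word_component:
  assumes "amalg_rel GU HU v w"
  shows "{i. amalg_rel (G i) (H i) (word_component i v) (word_component i w)} \<in> U"
  using assms
proof induction
  case (refl w)
  then show ?case
    using UG.UNIV_mem by (simp add: amalg_rel.refl)
next
  case (sym v w)
  then show ?case
    by (auto elim!: UG.superset_mem intro: amalg_rel.sym)
next
  case (trans u v w)
  have "{i. amalg_rel (G i) (H i) (word_component i u) (word_component i v)} \<inter>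
        {i. amalg_rel (G i) (H i) (word_component i v) (word_component i w)} \<subseteq>
        {i. amalg_rel (G i) (H i) (word_component i u) (word_component i w)}"
    using amalg_rel.trans by blast
  then show ?case
    using UG.Int_subset_mem[OF trans.IH] by blast
next
  case (cong v w x y)
  then show ?case
    by (auto simp: word_component_append elim!: UG.superset_mem intro: amalg_rel.cong)
next
  case (mult g g' j)
  have "amalg_rel (G i) (H i) [(j, UG.ultra_rep g i), (j, UG.ultra_rep g' i)]
          [(j, UG.ultra_rep g i \<otimes>\<^bsub>G i\<^esub> UG.ultra_rep g' i)]" for i
    using mult.hyps by (intro amalg_rel.mult UG.ultra_rep_closed)
  then show ?case
    using UG.ultra_rep_mult[OF mult.hyps]
    by (auto simp: word_component_def elim!: UG.superset_mem)
next
  case (one j)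
  then show ?case
    using UG.ultra_rep_one by (auto simp: word_component_def elim!: UG.superset_mem intro: amalg_rel.one)
next
  case (amalg h j k)
  then obtain f where f: "h = ultra_class G U f" "\<forall>i. f i \<in> H i"
    unfolding ultraprod_sub_def by blast
  then have "f \<in> carrier UG.PG"
    using subgroup.mem_carrier[OF subgroup_H] by simp
  then have "{i. UG.ultra_rep h i = f i} \<in> U"
    using UG.ultra_rep_ultra_class f(1) by simp
  then show ?case
    using f(2) by (auto simp: word_component_def elim!: UG.superset_mem intro: amalg_rel.amalg)
qed

lemma eventually_reduced_word_component:
  assumes red: "reduced GU HU r"
  shows "{i. reduced (G i) (H i) (word_component i r)} \<in> U"
proof -
  have r: "r \<in> lists (UNIV \<times> carrier GU)" "r \<noteq> []" "successively (\<lambda>x y. fst x \<noteq> fst y) r"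
    using red by (auto simp: reduced_def)
  have shape: "word_component i r \<in> lists (UNIV \<times> carrier (G i)) \<and> word_component i r \<noteq> [] \<and>
      successively (\<lambda>x y. fst x \<noteq> fst y) (word_component i r)" for i
    using r word_component_lists[OF r(1)]
    by (auto simp: word_component_def successively_map case_prod_beta elim: successively_mono)
  consider "\<forall>x\<in>set r. snd x \<notin> HU" | j g where "r = [(j, g)]" "g \<noteq> \<one>\<^bsub>GU\<^esub>"
    using red by (auto simp: reduced_def)
  then show ?thesis
  proof cases
    case 1
    have "{i. \<forall>x\<in>set r. UG.ultra_rep (snd x) i \<notin> H i} \<in> U"
      using 1 r(1) by (intro UG.finite_Ball_mem ultra_rep_not_in_sub) auto
    then show ?thesis
      using shape by (elim UG.superset_mem) (auto simp: reduced_def word_component_def)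
  next
    case 2
    then have "{i. UG.ultra_rep g i \<noteq> \<one>\<^bsub>G i\<^esub>} \<in> U"
      using r(1) by (intro UG.ultra_rep_neq_one) auto
    then show ?thesis
      using shape 2 by (elim UG.superset_mem) (auto simp: reduced_def word_component_def)
  qed
qed

lemma amalg_rel_trivial_if_eventually:
  assumes w: "w \<in> lists (UNIV \<times> carrier GU)"
    and triv: "{i. amalg_rel (G i) (H i) (word_component i w) []} \<in> U"
  shows "amalg_rel GU HU w []"
proof (rule ccontr)
  assume "\<not> amalg_rel GU HU w []"
  then obtain r where r: "reduced GU HU r" "amalg_rel GU HU w r"
    using amalgam.trivial_or_reduced[OF amalgam_ultraprod w] by blast
  have "{i. amalg_rel (G i) (H i) (word_component i w) (word_component i r)} \<inter>
        {i. amalg_rel (G i) (H i) (word_component i w) []} \<inter>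
        {i. reduced (G i) (H i) (word_component i r)} \<noteq> {}"
    using UG.Int_mem[OF UG.Int_mem[OF eventually_amalg_rel_word_component[OF r(2)] triv]
        eventually_reduced_word_component[OF r(1)]]
    by (rule UG.mem_nonempty)
  then obtain i where "amalg_rel (G i) (H i) (word_component i r) []"
    and "reduced (G i) (H i) (word_component i r)"
    using amalg_rel.sym amalg_rel.trans by blast
  then show False
    using amalgam.reduced_not_trivial[OF amalgam_component] by blast
qed

definition amalg_ultra_map ::
    "(nat \<times> (nat \<Rightarrow> 'g) set) list set \<Rightarrow> (nat \<Rightarrow> (nat \<times> 'g) list set) set" where
  "amalg_ultra_map A =
    ultra_class FP U (\<lambda>i. amalg_class (G i) (H i) (word_component i (SOME w. w \<in> A)))"

lemma amalg_class_word_component_closed: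
  "w \<in> lists (UNIV \<times> carrier GU) \<Longrightarrow>
   (\<lambda>i. amalg_class (G i) (H i) (word_component i w)) \<in> carrier UFP.PG"
  using word_component_lists by (simp add: carrier_amalg_free_product)

lemma amalg_ultra_map_class:
  assumes w: "w \<in> lists (UNIV \<times> carrier GU)"
  shows "amalg_ultra_map (amalg_class GU HU w) =
    ultra_class FP U (\<lambda>i. amalg_class (G i) (H i) (word_component i w))"
proof -
  define v where "v = (SOME v. v \<in> amalg_class GU HU w)"
  have wv: "amalg_rel GU HU w v"
    unfolding v_def by (rule amalg_rel_some_class)
  have v: "v \<in> lists (UNIV \<times> carrier GU)"
    using amalg_rel_lists_iff[OF wv group.is_monoid[OF UG.group_ultraprod]
        subgroup.subset[OF subgroup_ultraprod_sub]] w by simp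
  have "{i. amalg_class (G i) (H i) (word_component i v) =
      amalg_class (G i) (H i) (word_component i w)} \<in> U"
    using eventually_amalg_rel_word_component[OF wv]
    by (elim UG.superset_mem) (auto simp: amalg_class_eq_iff intro: amalg_rel.sym)
  then show ?thesis
    unfolding amalg_ultra_map_def v_def[symmetric]
    using UFP.ultra_class_eq_iff[OF amalg_class_word_component_closed[OF v]
        amalg_class_word_component_closed[OF w]] by simp
qed

lemma amalg_ultra_map_hom:
  "amalg_ultra_map \<in> hom (amalg_free_product GU HU) (ultraprod FP U)"
proof (rule homI)
  fix x
  assume "x \<in> carrier (amalg_free_product GU HU)"
  then obtain w where "w \<in> lists (UNIV \<times> carrier GU)" "x = amalg_class GU HU w"
    by (auto simp: carrier_amalg_free_product)
  then show "amalg_ultra_map x \<in> carrier (ultraprod FP U)"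
    using amalg_ultra_map_class UFP.ultra_class.hom_closed amalg_class_word_component_closed by simp
next
  fix x y
  assume "x \<in> carrier (amalg_free_product GU HU)" "y \<in> carrier (amalg_free_product GU HU)"
  then obtain v w where v: "v \<in> lists (UNIV \<times> carrier GU)" "x = amalg_class GU HU v"
    and w: "w \<in> lists (UNIV \<times> carrier GU)" "y = amalg_class GU HU w"
    by (auto simp: carrier_amalg_free_product)
  then show "amalg_ultra_map (x \<otimes>\<^bsub>amalg_free_product GU HU\<^esub> y) =
             amalg_ultra_map x \<otimes>\<^bsub>ultraprod FP U\<^esub> amalg_ultra_map y"
    using UFP.ultra_class_mult[OF amalg_class_word_component_closed[OF v(1)]
        amalg_class_word_component_closed[OF w(1)]]
    by (simp add: mult_amalg_free_product amalg_ultra_map_class word_component_append)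
qed

lemma amalg_ultra_map_incl:
  assumes f: "\<forall>i. f i \<in> carrier (G i)"
  shows "amalg_ultra_map (amalg_incl GU HU j (ultra_class G U f)) =
    ultra_class FP U (\<lambda>i. amalg_incl (G i) (H i) j (f i))"
proof -
  have "[(j, ultra_class G U f)] \<in> lists (UNIV \<times> carrier GU)"
    using f UG.ultra_class.hom_closed by simp
  moreover have "{i. UG.ultra_rep (ultra_class G U f) i = f i} \<in> U"
    using UG.ultra_rep_ultra_class f by simp
  then have "{i. amalg_class (G i) (H i) (word_component i [(j, ultra_class G U f)]) =
      amalg_incl (G i) (H i) j (f i)} \<in> U"
    by (elim UG.superset_mem) (auto simp: word_component_def amalg_incl_def)
  ultimately show ?thesis
    using UFP.ultra_class_eq_iff amalg_class_word_component_closed f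
    by (simp add: amalg_incl_def amalg_ultra_map_class carrier_amalg_free_product)
qed

lemma amalg_ultra_map_inj:
  "inj_on amalg_ultra_map (carrier (amalg_free_product GU HU))"
proof -
  have "x = \<one>\<^bsub>amalg_free_product GU HU\<^esub>"
    if x: "x \<in> carrier (amalg_free_product GU HU)"
      and x_one: "amalg_ultra_map x = \<one>\<^bsub>ultraprod FP U\<^esub>" for x
  proof -
    obtain w where w: "w \<in> lists (UNIV \<times> carrier GU)" "x = amalg_class GU HU w"
      using x by (auto simp: carrier_amalg_free_product)
    have "{i. amalg_class (G i) (H i) (word_component i w) = amalg_class (G i) (H i) []} \<in> U"
      using x_one UFP.component_group_simps(1)
        UFP.ultra_class_eq_iff[OF amalg_class_word_component_closed[OF w(1)], of "\<lambda>i. \<one>\<^bsub>FP i\<^esub>"]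
      by (simp add: w amalg_ultra_map_class UFP.one_ultraprod one_amalg_free_product)
    then show ?thesis
      using amalg_rel_trivial_if_eventually[OF w(1)]
      by (simp add: w amalg_class_eq_iff one_amalg_free_product)
  qed
  then show ?thesis
    using inj_on_one_iff'[OF amalg_ultra_map_hom group_amalg_free_product[OF UG.group_ultraprod]
        UFP.group_ultraprod] by blast
qed

end

theorem lemma2p5:
  fixes G :: "nat \<Rightarrow> 'g monoid" and H :: "nat \<Rightarrow> 'g set" and U :: "nat set set"
  assumes "\<And>i. group (G i)"
    and "\<And>i. subgroup (H i) (G i)"
    and "free_ultrafilter U"
  shows "\<exists>\<Phi>. \<Phi> \<in> hom (amalg_free_product (ultraprod G U) (ultraprod_sub G H U))
                     (ultraprod (\<lambda>i. amalg_free_product (G i) (H i)) U)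
          \<and> inj_on \<Phi> (carrier (amalg_free_product (ultraprod G U) (ultraprod_sub G H U)))
          \<and> (\<forall>j f. (\<forall>i. f i \<in> carrier (G i)) \<longrightarrow>
                \<Phi> (amalg_incl (ultraprod G U) (ultraprod_sub G H U) j (ultra_class G U f))
                  = ultra_class (\<lambda>i. amalg_free_product (G i) (H i)) U
                      (\<lambda>i. amalg_incl (G i) (H i) j (f i)))"
proof -
  interpret ultraproduct_amalgam G H U
    using assms free_ultrafilter_imp_set_ultrafilter by (simp add: ultraproduct_amalgam_def)
  show ?thesis
    using amalg_ultra_map_hom amalg_ultra_map_inj amalg_ultra_map_incl by blast
qed

end
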